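(* Let $\mathcal{P}$ be an arbitrary set of primes all smaller than $\log x$, and let $S(x, \mathcal{P})$ be the number of positive integers $n \le x$ not divisible by any prime in $\mathcal{P}$. Then $$S(x,\mathcal{P}) \le (1+o(1)) \, x \exp\Big(-\sum_{p \in \mathcal{P}} \frac1p\Big)$$ as $x \to \infty$.
   Context: $\log$ is the natural logarithm. *)

theory Defs
  imports Complex_Main "HOL-Computational_Algebra.Primes"
begin

definition sieve_count :: "real \<Rightarrow> nat set \<Rightarrow> nat" where
  "sieve_count x P = card {n :: nat. 1 \<le> n \<and> real n \<le> x \<and> (\<forall>p\<in>P. \<not> p dvd n)}"

end

theory Submission imports Defs "HOL-Real_Asymp.Real_Asymp" begin

text \<open>
  Legendre's sieve gives \<open>S(x, P) = x \<Prod>(1 - 1/p) + O(2^|P|)\<close>, and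
  \<open>\<Prod>(1 - 1/p) \<le> exp (-\<Sum>1/p)\<close> since \<open>1 - t \<le> exp (-t)\<close>. When every prime in
  \<open>P\<close> is below \<open>ln x\<close>, the error \<open>2^|P| \<le> 2^(ln x) = x^(ln 2)\<close> is \<open>o(x / ln x)\<close>,
  while the main term is at least \<open>x / ln x\<close>, because the product over \<open>P\<close> dominates
  the telescoping product of \<open>1 - 1/k\<close> over \<open>2 \<le> k \<le> m\<close>, which is \<open>1/m\<close>.
\<close>

definition sifted :: "real \<Rightarrow> nat set \<Rightarrow> nat set" where
  "sifted x P = {n. 1 \<le> n \<and> real n \<le> x \<and> (\<forall>p\<in>P. \<not> p dvd n)}"

lemma sieve_count_eq_card_sifted: "sieve_count x P = card (sifted x P)"
  by (simp add: sieve_count_def sifted_def)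

lemma finite_sifted [simp]: "finite (sifted x P)"
  by (rule finite_subset[of _ "{..nat \<lfloor>x\<rfloor>}"]) (auto simp: sifted_def le_nat_floor)

lemma sieve_count_empty:
  assumes "x \<ge> 0"
  shows "sieve_count x {} = nat \<lfloor>x\<rfloor>"
proof -
  have "real n \<le> x \<longleftrightarrow> n \<le> nat \<lfloor>x\<rfloor>" for n
  proof
    assume "n \<le> nat \<lfloor>x\<rfloor>"
    hence "real n \<le> real (nat \<lfloor>x\<rfloor>)" by simp
    also have "\<dots> \<le> x" using assms by simp
    finally show "real n \<le> x" .
  qed (rule le_nat_floor)
  hence "sifted x {} = {1..nat \<lfloor>x\<rfloor>}"
    unfolding sifted_def atLeastAtMost_def by blast
  thus ?thesis by (simp add: sieve_count_eq_card_sifted)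
qed

lemma sifted_multiples:
  assumes "\<forall>p\<in>P. prime p" "prime q" "q \<notin> P"
  shows "{n \<in> sifted x P. q dvd n} = (*) q ` sifted (x / q) P"
proof -
  have q: "real q > 0" using assms(2) prime_gt_0_nat by simp
  show ?thesis
  proof (intro equalityI subsetI)
    fix n assume "n \<in> {n \<in> sifted x P. q dvd n}"
    then obtain m where n: "n = q * m" "n \<in> sifted x P" by auto
    hence "m \<in> sifted (x / q) P"
      using q by (auto simp: sifted_def field_simps)
    thus "n \<in> (*) q ` sifted (x / q) P" using n by blast
  next
    fix n assume "n \<in> (*) q ` sifted (x / q) P"
    then obtain m where n: "n = q * m" "m \<in> sifted (x / q) P" by auto
    have "\<not> p dvd q * m" if "p \<in> P" for p
    proof
      assume "p dvd q * m"
      moreover have "\<not> p dvd q" using that assms primes_dvd_imp_eq by metis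
      ultimately show False
        using n(2) that assms by (auto simp: sifted_def prime_dvd_mult_iff)
    qed
    thus "n \<in> {n \<in> sifted x P. q dvd n}"
      using n q by (auto simp: sifted_def field_simps)
  qed
qed

text \<open>Numbers surviving \<open>P\<close> either also avoid \<open>q\<close>, or are \<open>q\<close> times a number up to \<open>x/q\<close> surviving \<open>P\<close>.\<close>
lemma sieve_count_insert:
  assumes "\<forall>p\<in>P. prime p" "prime q" "q \<notin> P"
  shows "sieve_count x P = sieve_count x (insert q P) + sieve_count (x / q) P"
proof -
  have split: "sifted x P = sifted x (insert q P) \<union> {n \<in> sifted x P. q dvd n}"
    by (auto simp: sifted_def)
  have "inj ((*) q)" using assms(2) prime_gt_0_nat by (auto simp: inj_def)
  hence "card {n \<in> sifted x P. q dvd n} = sieve_count (x / q) P"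
    by (simp add: sifted_multiples[OF assms] card_image inj_on_subset sieve_count_eq_card_sifted)
  moreover have "sifted x (insert q P) \<inter> {n \<in> sifted x P. q dvd n} = {}"
    by (auto simp: sifted_def)
  ultimately show ?thesis
    by (subst sieve_count_eq_card_sifted, subst split) (simp add: card_Un_disjoint sieve_count_eq_card_sifted)
qed

theorem Legendre_sieve:
  assumes "finite P" "\<forall>p\<in>P. prime p" "x \<ge> 0"
  shows "\<bar>real (sieve_count x P) - x * (\<Prod>p\<in>P. 1 - 1 / real p)\<bar> \<le> 2 ^ card P"
  using assms
proof (induction P arbitrary: x rule: finite_induct)
  case empty
  thus ?case by (simp add: sieve_count_empty) linarith
next
  case (insert q P)
  let ?\<Pi> = "\<Prod>p\<in>P. 1 - 1 / real p"
  have q: "real q > 0" using insert.prems prime_gt_0_nat by auto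
  have IH: "\<bar>real (sieve_count y P) - y * ?\<Pi>\<bar> \<le> 2 ^ card P" if "y \<ge> 0" for y
    using insert.IH insert.prems that by auto
  have "real (sieve_count x (insert q P)) = real (sieve_count x P) - real (sieve_count (x / q) P)"
    using sieve_count_insert[of P q x] insert by simp
  moreover have "x * (\<Prod>p\<in>insert q P. 1 - 1 / real p) = x * ?\<Pi> - (x / q) * ?\<Pi>"
    using insert q by (simp add: algebra_simps)
  moreover have "(2::real) ^ card (insert q P) = 2 * 2 ^ card P"
    using insert.hyps by simp
  moreover have "\<bar>real (sieve_count x P) - x * ?\<Pi>\<bar> \<le> 2 ^ card P"
    by (rule IH) (use insert.prems in simp)
  moreover have "\<bar>real (sieve_count (x / q) P) - (x / q) * ?\<Pi>\<bar> \<le> 2 ^ card P"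
    by (rule IH) (use insert.prems q in simp)
  ultimately show ?case
    by (simp only: abs_le_iff) linarith
qed

lemma prod_one_minus_inverse_le_exp:
  assumes "finite P"
  shows "(\<Prod>p\<in>P. 1 - 1 / real p) \<le> exp (- (\<Sum>p\<in>P. 1 / real p))"
proof -
  have "(\<Prod>p\<in>P. 1 - 1 / real p) \<le> (\<Prod>p\<in>P. exp (- (1 / real p)))"
  proof (rule prod_mono)
    fix p :: nat
    show "0 \<le> 1 - 1 / real p \<and> 1 - 1 / real p \<le> exp (- (1 / real p))"
      using exp_ge_add_one_self[of "- (1 / real p)"] by (cases "p = 0") auto
  qed
  thus ?thesis using assms by (simp add: exp_sum[symmetric] sum_negf)
qed

lemma prod_one_minus_inverse_telescope:
  "m \<ge> 1 \<Longrightarrow> (\<Prod>k\<in>{2..m}. 1 - 1 / real k) = 1 / real m"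
proof (induction m rule: dec_induct)
  case (step m)
  have "{2..Suc m} = insert (Suc m) {2..m}" using step by auto
  thus ?case using step by (simp add: field_simps)
qed simp

lemma prod_one_minus_inverse_ge_subset:
  assumes "P \<subseteq> {2..m}" "m \<ge> 1"
  shows "1 / real m \<le> (\<Prod>p\<in>P. 1 - 1 / real p)"
proof -
  have "1 / real m = (\<Prod>k\<in>{2..m}. 1 - 1 / real k)"
    using assms(2) by (rule prod_one_minus_inverse_telescope[symmetric])
  also have "\<dots> = (\<Prod>k\<in>{2..m} - P. 1 - 1 / real k) * (\<Prod>k\<in>P. 1 - 1 / real k)"
    using assms(1) by (rule prod.subset_diff) simp
  also have "\<dots> \<le> (\<Prod>k\<in>P. 1 - 1 / real k)"
    using assms(1) by (intro mult_left_le_one_le prod_le_1 prod_nonneg) auto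
  finally show ?thesis .
qed

lemma eventually_two_powr_ln_mult_ln_le:
  assumes "\<epsilon> > 0"
  shows "\<forall>\<^sub>F x in at_top. 2 powr ln x * ln x \<le> \<epsilon> * (x::real)"
proof -
  have "(\<lambda>x::real. x powr ln 2 * ln x) \<in> o(\<lambda>x. x)"
    using ln_2_less_1 by real_asymp
  hence "\<forall>\<^sub>F x in at_top. \<bar>x powr ln 2 * ln x\<bar> \<le> \<epsilon> * \<bar>x::real\<bar>"
    using assms landau_o.smallD by fastforce
  thus ?thesis
    using eventually_gt_at_top[of 0]
    by eventually_elim (simp add: powr_def mult.commute)
qed

lemma primes_le_subset:
  assumes "\<forall>p\<in>P. prime p \<and> real p \<le> y"
  shows "P \<subseteq> {2..nat \<lfloor>y\<rfloor>}"
  using assms by (auto simp: prime_ge_2_nat le_nat_floor)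

lemma card_primes_le:
  assumes "\<forall>p\<in>P. prime p \<and> real p \<le> y" "y \<ge> 0"
  shows "real (card P) \<le> y"
proof -
  have "card P \<le> card {2..nat \<lfloor>y\<rfloor>}"
    using primes_le_subset[OF assms(1)] by (rule card_mono[rotated]) simp
  also have "\<dots> \<le> nat \<lfloor>y\<rfloor>" by simp
  finally show ?thesis using assms(2) by linarith
qed

lemma prod_one_minus_inverse_primes_ge:
  assumes "\<forall>p\<in>P. prime p \<and> real p \<le> y" "y \<ge> 1"
  shows "1 / y \<le> (\<Prod>p\<in>P. 1 - 1 / real p)"
proof -
  have m: "1 \<le> nat \<lfloor>y\<rfloor>" "real (nat \<lfloor>y\<rfloor>) \<le> y"
    using assms(2) by (simp_all add: le_nat_floor)
  hence "1 / y \<le> 1 / real (nat \<lfloor>y\<rfloor>)"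
    by (intro divide_left_mono) auto
  also have "\<dots> \<le> (\<Prod>p\<in>P. 1 - 1 / real p)"
    using primes_le_subset[OF assms(1)] m(1) by (rule prod_one_minus_inverse_ge_subset)
  finally show ?thesis .
qed

lemma sieve_count_primes_below_ln_le:
  assumes x: "x > 0" and ln: "ln x \<ge> 1" and small: "2 powr ln x * ln x \<le> \<epsilon> * x"
    and P: "\<forall>p\<in>P. prime p \<and> real p < ln x"
  shows "real (sieve_count x P) \<le> (1 + \<epsilon>) * x * exp (- (\<Sum>p\<in>P. 1 / real p))"
proof -
  define \<Pi> where "\<Pi> = (\<Prod>p\<in>P. 1 - 1 / real p)"
  have P': "\<forall>p\<in>P. prime p \<and> real p \<le> ln x" using P by auto
  have fin: "finite P" using primes_le_subset[OF P'] finite_subset by blast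
  have "0 \<le> 2 powr ln x * ln x" using ln by simp
  hence \<epsilon>: "\<epsilon> \<ge> 0" using small x by (metis order.trans zero_le_mult_iff not_less)
  have "real (sieve_count x P) \<le> x * \<Pi> + 2 ^ card P"
    using Legendre_sieve[OF fin, of x] P x unfolding \<Pi>_def by auto
  also have "(2::real) ^ card P \<le> 2 powr ln x"
    using card_primes_le[OF P'] ln by (simp add: powr_realpow[symmetric])
  also have "2 powr ln x \<le> \<epsilon> * x * (1 / ln x)"
    using small ln by (simp add: field_simps)
  also have "\<dots> \<le> \<epsilon> * x * \<Pi>"
    using prod_one_minus_inverse_primes_ge[OF P' ln] \<epsilon> x unfolding \<Pi>_def
    by (intro mult_left_mono) auto
  also have "x * \<Pi> + \<epsilon> * x * \<Pi> = (1 + \<epsilon>) * x * \<Pi>" by algebra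
  also have "\<dots> \<le> (1 + \<epsilon>) * x * exp (- (\<Sum>p\<in>P. 1 / real p))"
    using prod_one_minus_inverse_le_exp[OF fin] \<epsilon> x unfolding \<Pi>_def
    by (intro mult_left_mono) auto
  finally show ?thesis by simp
qed

theorem corollary3p8:
  shows "\<forall>\<epsilon>>0. \<forall>\<^sub>F x in at_top. \<forall>P :: nat set.
           (\<forall>p\<in>P. prime p \<and> real p < ln x) \<longrightarrow>
           real (sieve_count x P) \<le> (1 + \<epsilon>) * x * exp (- (\<Sum>p\<in>P. 1 / real p))"
proof (intro allI impI)
  fix \<epsilon> :: real
  assume "\<epsilon> > 0"
  have "\<forall>\<^sub>F x in at_top. ln x \<ge> (1::real)" by real_asymp
  with eventually_two_powr_ln_mult_ln_le[OF \<open>\<epsilon> > 0\<close>] eventually_gt_at_top[of 0]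
  show "\<forall>\<^sub>F x in at_top. \<forall>P :: nat set. (\<forall>p\<in>P. prime p \<and> real p < ln x) \<longrightarrow>
          real (sieve_count x P) \<le> (1 + \<epsilon>) * x * exp (- (\<Sum>p\<in>P. 1 / real p))"
    by eventually_elim (use sieve_count_primes_below_ln_le in blast)
qed

end
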